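(* Let $\Phi:\{0,1\}^n\to\{0,1\}^n$ and let $\mu\in\{0,1\}^n$ be a fixed point of $\Phi$. Then: a) $\overline{W}(\mu)=\{\mu'\in\mathbf{B}^n:\exists\rho'\in P_n,\ \lim_{t\to\infty}\Phi^{\rho'}(\mu',t)=\mu\}$ and $\underline{W}(\mu)=\{\mu'\in\mathbf{B}^n:\forall\rho'\in P_n,\ \lim_{t\to\infty}\Phi^{\rho'}(\mu',t)=\mu\}$; b) $\{\mu\}\subset\underline{W}(\mu)\subset\overline{W}(\mu)$; in particular $\mu$ is p-attractive and n-attractive (i.e. $\overline{W}(\mu)\ne\emptyset$ and $\underline{W}(\mu)\neq\emptyset$); c) $\overline{W}(\mu)$ is p-invariant and $\underline{W}(\mu)$ is n-invariant.
   Context: Let $\mathbf{B}=\{0,1\}$ (discrete topology), $n\ge 1$, and $\Phi:\mathbf{B}^n\to\mathbf{B}^n$. For $\nu\in\mathbf{B}^n$ define $\Phi^\nu_i(\mu)=\mu_i$ if $\nu_i=0$ and $\Phi^\nu_i(\mu)=\Phi_i(\mu)$ if $\nu_i=1$. Put $\Phi^{\alpha^0\dots\alpha^k}=\Phi^{\alpha^k}\circ\cdots\circ\Phi^{\alpha^0}$. A sequence $(\alpha^k)_{k\in\mathbf{N}}$ in $\mathbf{B}^n$ is progressive if each set $\{k:\alpha^k_i=1\}$, $i=1,\dots,n$, is infinite. $Seq$ is the set of strictly increasing real sequences unbounded above. $P_n$ is the set of $\rho:\mathbf{R}\to\mathbf{B}^n$ with $\rho(t_k)=\alpha^k$ and $\rho(t)=0$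 for $t\notin\{t_k\}$, $\alpha$ progressive, $(t_k)\in Seq$. Orbit: $\Phi^\rho(\mu,t)=\mu$ for $t<t_0$, $=\Phi^{\alpha^0\dots\alpha^k}(\mu)$ for $t\in[t_k,t_{k+1})$; $Or_\rho(\mu)=\{\Phi^\rho(\mu,t):t\in\mathbf{R}\}$. For $x:\mathbf{R}\to\mathbf{B}^n$, $\lim_{t\to\infty}x(t)=x(t')$ means there is $t'$ with $x(t)=x(t')$ for all $t\ge t'$. $\omega_\rho(\mu)=\{\mu':\exists(s_k)\in Seq,\ \Phi^\rho(\mu,s_k)=\mu'$ for all large $k\}$. $\overline{W}(\mu)=\{\mu':\exists\rho'\in P_n,\ \omega_{\rho'}(\mu')\subset\{\mu\}\}$, $\underline{W}(\mu)=\{\mu':\forall\rho'\in P_n,\ \omega_{\rho'}(\mu')\subset\{\mu\}\}$. A nonempty set $A\subset\mathbf{B}^n$ is p-invariant if for every $\mu\in A$ there is $\rho\in P_n$ with $Or_\rho(\mu)\subset A$, and n-invariant if for every $\mu\in A$ and every $\rho\in P_n$, $Or_\rho(\mu)\subset A$. *)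

theory Defs
  imports Complex_Main "HOL-Library.Infinite_Set"
begin

text \<open>States of B^n are modelled as functions 'n => bool over a finite index type 'n
  (so n = CARD('n) >= 1); False = 0, True = 1.\<close>

type_synonym 'n state = "'n \<Rightarrow> bool"

definition Phi_nu :: "('n state \<Rightarrow> 'n state) \<Rightarrow> 'n state \<Rightarrow> 'n state \<Rightarrow> 'n state" where
  "Phi_nu \<Phi> \<nu> \<mu> = (\<lambda>i. if \<nu> i then \<Phi> \<mu> i else \<mu> i)"

fun Phi_comp :: "('n state \<Rightarrow> 'n state) \<Rightarrow> (nat \<Rightarrow> 'n state) \<Rightarrow> nat \<Rightarrow> 'n state \<Rightarrow> 'n state" where
  "Phi_comp \<Phi> \<alpha> 0 \<mu> = Phi_nu \<Phi> (\<alpha> 0) \<mu>"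
| "Phi_comp \<Phi> \<alpha> (Suc k) \<mu> = Phi_nu \<Phi> (\<alpha> (Suc k)) (Phi_comp \<Phi> \<alpha> k \<mu>)"

definition progressive :: "(nat \<Rightarrow> 'n state) \<Rightarrow> bool" where
  "progressive \<alpha> \<longleftrightarrow> (\<forall>i. infinite {k. \<alpha> k i})"

definition Seq :: "(nat \<Rightarrow> real) set" where
  "Seq = {t. strict_mono t \<and> (\<forall>M. \<exists>k. t k > M)}"

definition is_rep :: "(real \<Rightarrow> 'n state) \<Rightarrow> (nat \<Rightarrow> 'n state) \<Rightarrow> (nat \<Rightarrow> real) \<Rightarrow> bool" where
  "is_rep \<rho> \<alpha> ts \<longleftrightarrow> progressive \<alpha> \<and> ts \<in> Seq \<and> (\<forall>k. \<rho> (ts k) = \<alpha> k)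
     \<and> (\<forall>x. x \<notin> range ts \<longrightarrow> \<rho> x = (\<lambda>_. False))"

definition P :: "(real \<Rightarrow> 'n state) set" where
  "P = {\<rho>. \<exists>\<alpha> ts. is_rep \<rho> \<alpha> ts}"

definition orbit :: "('n state \<Rightarrow> 'n state) \<Rightarrow> (real \<Rightarrow> 'n state) \<Rightarrow> 'n state \<Rightarrow> real \<Rightarrow> 'n state" where
  "orbit \<Phi> \<rho> \<mu> x =
     (let (\<alpha>, ts) = (SOME p. is_rep \<rho> (fst p) (snd p)) in
      if x < ts 0 then \<mu>
      else Phi_comp \<Phi> \<alpha> (THE k. ts k \<le> x \<and> x < ts (Suc k)) \<mu>)"

definition Or :: "('n state \<Rightarrow> 'n state) \<Rightarrow> (real \<Rightarrow> 'n state) \<Rightarrow> 'n state \<Rightarrow> 'n state set" where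
  "Or \<Phi> \<rho> \<mu> = range (orbit \<Phi> \<rho> \<mu>)"

text \<open>lim_{t->oo} x(t) = v in the paper's sense: x is eventually constant equal to v.\<close>
definition lim_eq :: "(real \<Rightarrow> 'a) \<Rightarrow> 'a \<Rightarrow> bool" where
  "lim_eq x v \<longleftrightarrow> (\<exists>t'. x t' = v \<and> (\<forall>t\<ge>t'. x t = x t'))"

definition omega :: "('n state \<Rightarrow> 'n state) \<Rightarrow> (real \<Rightarrow> 'n state) \<Rightarrow> 'n state \<Rightarrow> 'n state set" where
  "omega \<Phi> \<rho> \<mu> = {\<mu>'. \<exists>s\<in>Seq. \<exists>K. \<forall>k\<ge>K. orbit \<Phi> \<rho> \<mu> (s k) = \<mu>'}"

definition Wbar :: "('n state \<Rightarrow> 'n state) \<Rightarrow> 'n state \<Rightarrow> 'n state set" where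
  "Wbar \<Phi> \<mu> = {\<mu>'. \<exists>\<rho>'\<in>P. omega \<Phi> \<rho>' \<mu>' \<subseteq> {\<mu>}}"

definition Wund :: "('n state \<Rightarrow> 'n state) \<Rightarrow> 'n state \<Rightarrow> 'n state set" where
  "Wund \<Phi> \<mu> = {\<mu>'. \<forall>\<rho>'\<in>P. omega \<Phi> \<rho>' \<mu>' \<subseteq> {\<mu>}}"

definition p_invariant :: "('n state \<Rightarrow> 'n state) \<Rightarrow> 'n state set \<Rightarrow> bool" where
  "p_invariant \<Phi> A \<longleftrightarrow> A \<noteq> {} \<and> (\<forall>\<mu>\<in>A. \<exists>\<rho>\<in>P. Or \<Phi> \<rho> \<mu> \<subseteq> A)"

definition n_invariant :: "('n state \<Rightarrow> 'n state) \<Rightarrow> 'n state set \<Rightarrow> bool" where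
  "n_invariant \<Phi> A \<longleftrightarrow> A \<noteq> {} \<and> (\<forall>\<mu>\<in>A. \<forall>\<rho>\<in>P. Or \<Phi> \<rho> \<mu> \<subseteq> A)"

definition p_attractive :: "('n state \<Rightarrow> 'n state) \<Rightarrow> 'n state \<Rightarrow> bool" where
  "p_attractive \<Phi> \<mu> \<longleftrightarrow> Wbar \<Phi> \<mu> \<noteq> {}"

definition n_attractive :: "('n state \<Rightarrow> 'n state) \<Rightarrow> 'n state \<Rightarrow> bool" where
  "n_attractive \<Phi> \<mu> \<longleftrightarrow> Wund \<Phi> \<mu> \<noteq> {}"

end

theory Submission
  imports Defs
begin

text \<open>Because \<open>\<mu>\<close> is fixed, every orbit starting at \<open>\<mu>\<close> is constant, so \<open>\<mu>\<close> lies in the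
  n-basin, which is contained in the p-basin as soon as some progressive signal exists. On the
  finite state space, \<open>\<omega>(\<mu>') \<subseteq> {\<mu>}\<close> says exactly that the orbit is eventually \<open>\<mu>\<close>:
  otherwise another state recurs at arbitrarily late times and a sequence in \<open>Seq\<close> picks it up.
  Invariance is proved by surgery on signals. A point reached at time \<open>t\<close> along \<open>\<rho>\<close> is driven
  to \<open>\<mu>\<close> by the part of \<open>\<rho>\<close> after \<open>t\<close> (p-invariance); and any signal started from that point,
  shifted beyond \<open>t\<close> and appended to \<open>\<rho>\<close>, gives a signal from the original point, whose orbit
  converges to \<open>\<mu>\<close> (n-invariance). The orbit is defined through a chosen representation of the
  signal; it is first identified with the representation-free trajectory, which folds
  \<open>\<Phi>\<^sup>\<nu>\<close> over the finitely many active instants, so that this surgery makes sense.\<close>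

lemma sorted_list_of_set_eqI:
  fixes xs :: "'a::linorder list"
  assumes "sorted_wrt (<) xs" and "set xs = A"
  shows "sorted_list_of_set A = xs"
  using assms by (intro strict_sorted_equal) auto

lemma sorted_list_of_set_Un_ordered:
  fixes A B :: "'a::linorder set"
  assumes "finite A" and "finite B" and "\<forall>a\<in>A. \<forall>b\<in>B. a < b"
  shows "sorted_list_of_set (A \<union> B) = sorted_list_of_set A @ sorted_list_of_set B"
  using assms by (intro sorted_list_of_set_eqI) (auto simp: sorted_wrt_append)

lemma sorted_list_of_set_image_strict_mono:
  fixes f :: "'a::linorder \<Rightarrow> 'b::linorder"
  assumes "finite A" and "strict_mono f"
  shows "sorted_list_of_set (f ` A) = map f (sorted_list_of_set A)"
proof (rule sorted_list_of_set_eqI)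
  show "sorted_wrt (<) (map f (sorted_list_of_set A))"
    unfolding sorted_wrt_map
    by (rule sorted_wrt_mono_rel[OF _ strict_sorted_list_of_set])
       (use assms(2) in \<open>auto simp: strict_mono_def\<close>)
qed (use assms(1) in simp)

lemma in_set_sorted_list_of_setD: "s \<in> set (sorted_list_of_set A) \<Longrightarrow> s \<in> A"
  by (cases "finite A") auto

lemma Phi_nu_False: "Phi_nu \<Phi> (\<lambda>_. False) = id"
  by (auto simp: Phi_nu_def)

lemma Phi_comp_eq_fold: "Phi_comp \<Phi> \<alpha> k \<mu> = fold (\<lambda>j. Phi_nu \<Phi> (\<alpha> j)) [0..<Suc k] \<mu>"
  by (induction k) auto

lemma Phi_comp_fixpoint: "\<Phi> \<mu> = \<mu> \<Longrightarrow> Phi_comp \<Phi> \<alpha> k \<mu> = \<mu>"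
  by (induction k) (auto simp: Phi_nu_def)

lemma Seq_le_iff_less_Least:
  assumes "ts \<in> Seq"
  shows "ts k \<le> x \<longleftrightarrow> k < (LEAST k. x < ts k)"
proof -
  have mono: "strict_mono ts" and "\<exists>k. x < ts k" using assms by (auto simp: Seq_def)
  from this(2) have "x < ts (LEAST k. x < ts k)" by (rule LeastI_ex)
  then show ?thesis
    using mono not_less_Least[of k "\<lambda>k. x < ts k"]
    by (metis leD le_less_trans linorder_le_less_linear strict_mono_less_eq)
qed

lemma is_repD:
  assumes "is_rep \<rho> \<alpha> ts"
  shows "progressive \<alpha>" and "ts \<in> Seq" and "strict_mono ts" and "\<And>k. \<rho> (ts k) = \<alpha> k"
    and "\<And>x. x \<notin> range ts \<Longrightarrow> \<rho> x = (\<lambda>_. False)"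
  using assms by (auto simp: is_rep_def Seq_def)

lemma is_rep_quiet_before:
  assumes rep: "is_rep \<rho> \<alpha> ts" and "s < ts 0"
  shows "\<rho> s = (\<lambda>_. False)"
proof -
  have "ts 0 \<le> ts k" for k using is_repD(3)[OF rep] by (simp add: strict_mono_less_eq)
  then have "s \<notin> range ts" using \<open>s < ts 0\<close> by (auto simp: not_le[symmetric])
  then show ?thesis by (rule is_repD(5)[OF rep])
qed

lemma P_nonempty: "P \<noteq> {}"
proof -
  have "is_rep (\<lambda>x. if x \<in> range real then (\<lambda>_. True) else (\<lambda>_. False)) (\<lambda>_ _. True) real"
    by (auto simp: is_rep_def progressive_def Seq_def strict_mono_def reals_Archimedean2)
  then show ?thesis by (auto simp: P_def)
qed

definition events :: "(real \<Rightarrow> 'n state) \<Rightarrow> real \<Rightarrow> real set" where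
  "events \<rho> x = {s. s \<le> x \<and> \<rho> s \<noteq> (\<lambda>_. False)}"

definition trajectory ::
    "('n state \<Rightarrow> 'n state) \<Rightarrow> (real \<Rightarrow> 'n state) \<Rightarrow> 'n state \<Rightarrow> real \<Rightarrow> 'n state" where
  "trajectory \<Phi> \<rho> \<mu> x = fold (\<lambda>s. Phi_nu \<Phi> (\<rho> s)) (sorted_list_of_set (events \<rho> x)) \<mu>"
  \<comment> \<open>meaningful only if \<open>events \<rho> x\<close> is finite: otherwise the sorted list is \<open>[]\<close>\<close>

definition after :: "real \<Rightarrow> (real \<Rightarrow> 'n state) \<Rightarrow> real \<Rightarrow> 'n state" where
  "after t \<rho> = (\<lambda>s. if t < s then \<rho> s else (\<lambda>_. False))"

definition glue :: "(real \<Rightarrow> 'n state) \<Rightarrow> real \<Rightarrow> (real \<Rightarrow> 'n state) \<Rightarrow> real \<Rightarrow> 'n state" where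
  "glue \<rho>1 t \<rho>2 = (\<lambda>s. if s \<le> t then \<rho>1 s else \<rho>2 s)"

definition shift :: "real \<Rightarrow> (real \<Rightarrow> 'n state) \<Rightarrow> real \<Rightarrow> 'n state" where
  "shift c \<rho> = (\<lambda>s. \<rho> (s - c))"

lemma events_eq:
  assumes "is_rep \<rho> \<alpha> ts"
  shows "events \<rho> x = {s \<in> ts ` {..<(LEAST k. x < ts k)}. \<rho> s \<noteq> (\<lambda>_. False)}"
proof -
  have "s \<in> range ts" if "\<rho> s \<noteq> (\<lambda>_. False)" for s
    using is_repD(5)[OF assms] that by blast
  then show ?thesis
    using Seq_le_iff_less_Least[OF is_repD(2)[OF assms]] by (fastforce simp: events_def)
qed

lemma finite_events: "\<rho> \<in> P \<Longrightarrow> finite (events \<rho> x)"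
  by (auto simp: P_def events_eq)

lemma Phi_comp_at_Least:
  assumes "ts \<in> Seq"
  shows "(if x < ts 0 then \<mu> else Phi_comp \<Phi> \<alpha> (THE k. ts k \<le> x \<and> x < ts (Suc k)) \<mu>)
       = fold (\<lambda>j. Phi_nu \<Phi> (\<alpha> j)) [0..<LEAST k. x < ts k] \<mu>"
proof (cases "(LEAST k. x < ts k)")
  case 0
  then show ?thesis using Seq_le_iff_less_Least[OF assms, of 0 x] by simp
next
  case (Suc K)
  have idx: "ts k \<le> x \<longleftrightarrow> k < Suc K" for k
    using Seq_le_iff_less_Least[OF assms] Suc by simp
  then have "(THE k. ts k \<le> x \<and> x < ts (Suc k)) = K"
    by (intro the_equality) (auto simp: not_le[symmetric])
  then show ?thesis using idx[of 0] Suc by (simp add: Phi_comp_eq_fold)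
qed

lemma trajectory_eq_fold_upt:
  assumes rep: "is_rep \<rho> \<alpha> ts"
  shows "trajectory \<Phi> \<rho> \<mu> x = fold (\<lambda>j. Phi_nu \<Phi> (\<alpha> j)) [0..<LEAST k. x < ts k] \<mu>"
proof -
  let ?N = "LEAST k. x < ts k" and ?active = "\<lambda>s. \<rho> s \<noteq> (\<lambda>_. False)"
  have "sorted_wrt (<) (map ts [0..<?N])"
    unfolding sorted_wrt_map
    by (rule sorted_wrt_mono_rel[OF _ sorted_wrt_upt]) (use is_repD(3)[OF rep] in \<open>simp add: strict_mono_def\<close>)
  then have "sorted_list_of_set (events \<rho> x) = filter ?active (map ts [0..<?N])"
    by (intro sorted_list_of_set_eqI sorted_wrt_filter) (auto simp: events_eq[OF rep])
  moreover have "(\<lambda>s. if ?active s then Phi_nu \<Phi> (\<rho> s) else id) = (\<lambda>s. Phi_nu \<Phi> (\<rho> s))"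
    by (auto simp: Phi_nu_False)
  ultimately have "trajectory \<Phi> \<rho> \<mu> x = fold (\<lambda>s. Phi_nu \<Phi> (\<rho> s)) (map ts [0..<?N]) \<mu>"
    by (simp add: trajectory_def fold_filter)
  then show ?thesis by (simp add: fold_map comp_def is_repD(4)[OF rep])
qed

lemma orbit_eq_trajectory:
  assumes "\<rho> \<in> P"
  shows "orbit \<Phi> \<rho> \<mu> = trajectory \<Phi> \<rho> \<mu>"
proof
  fix x
  obtain \<alpha> ts where rep: "(SOME p. is_rep \<rho> (fst p) (snd p)) = (\<alpha>, ts)" by fastforce
  have "\<exists>p. is_rep \<rho> (fst p) (snd p)" using assms by (auto simp: P_def)
  then have "is_rep \<rho> \<alpha> ts" using someI_ex[of "\<lambda>p. is_rep \<rho> (fst p) (snd p)"] rep by simp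
  then show "orbit \<Phi> \<rho> \<mu> x = trajectory \<Phi> \<rho> \<mu> x"
    by (simp add: orbit_def rep Phi_comp_at_Least is_repD(2) trajectory_eq_fold_upt)
qed

lemma trajectory_cong:
  assumes "\<And>s. s \<le> x \<Longrightarrow> \<rho> s = \<rho>' s"
  shows "trajectory \<Phi> \<rho> \<mu> x = trajectory \<Phi> \<rho>' \<mu> x"
proof -
  have "events \<rho> x = events \<rho>' x" using assms by (auto simp: events_def)
  then show ?thesis
    unfolding trajectory_def using assms
    by (intro fold_cong) (auto simp: events_def dest: in_set_sorted_list_of_setD)
qed

lemma trajectory_after:
  assumes "finite (events \<rho> x)" and "t \<le> x"
  shows "trajectory \<Phi> \<rho> \<mu> x = trajectory \<Phi> (after t \<rho>) (trajectory \<Phi> \<rho> \<mu> t) x"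
proof -
  have split: "events \<rho> x = events \<rho> t \<union> events (after t \<rho>) x"
    using assms(2) by (auto simp: events_def after_def)
  have "finite (events \<rho> t)" "finite (events (after t \<rho>) x)"
    using assms(1) by (auto simp: split)
  moreover have "\<forall>a\<in>events \<rho> t. \<forall>b\<in>events (after t \<rho>) x. a < b"
    by (auto simp: events_def after_def)
  ultimately have "sorted_list_of_set (events \<rho> x)
      = sorted_list_of_set (events \<rho> t) @ sorted_list_of_set (events (after t \<rho>) x)"
    unfolding split by (rule sorted_list_of_set_Un_ordered)
  moreover have "fold (\<lambda>s. Phi_nu \<Phi> (\<rho> s)) (sorted_list_of_set (events (after t \<rho>) x)) \<nu>
      = fold (\<lambda>s. Phi_nu \<Phi> (after t \<rho> s)) (sorted_list_of_set (events (after t \<rho>) x)) \<nu>" for \<nu>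
    by (intro fold_cong) (auto simp: events_def after_def dest: in_set_sorted_list_of_setD)
  ultimately show ?thesis by (simp add: trajectory_def)
qed

lemma trajectory_shift: "trajectory \<Phi> (shift c \<rho>) \<mu> x = trajectory \<Phi> \<rho> \<mu> (x - c)"
proof -
  have events: "events (shift c \<rho>) x = (\<lambda>z. z + c) ` events \<rho> (x - c)"
    by (force simp: events_def shift_def image_iff algebra_simps)
  have mono: "strict_mono (\<lambda>z::real. z + c)" by (simp add: strict_mono_def)
  show ?thesis
  proof (cases "finite (events \<rho> (x - c))")
    case True
    have "trajectory \<Phi> (shift c \<rho>) \<mu> x
        = fold (\<lambda>s. Phi_nu \<Phi> (shift c \<rho> s)) (map (\<lambda>z. z + c) (sorted_list_of_set (events \<rho> (x - c)))) \<mu>"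
      unfolding trajectory_def events sorted_list_of_set_image_strict_mono[OF True mono] ..
    then show ?thesis by (simp add: trajectory_def fold_map comp_def shift_def)
  next
    case False
    then have "infinite (events (shift c \<rho>) x)"
      using events mono by (auto dest: finite_imageD strict_mono_imp_inj_on)
    then show ?thesis using False by (simp add: trajectory_def)
  qed
qed

lemma progressive_shift_index: "progressive (\<lambda>j. \<alpha> (j + N)) \<longleftrightarrow> progressive \<alpha>"
proof -
  have "finite {j. \<alpha> (j + N) i} \<longleftrightarrow> finite {k. \<alpha> k i}" for i
  proof -
    have "{k. \<alpha> k i} \<subseteq> {..<N} \<union> (\<lambda>j. j + N) ` {j. \<alpha> (j + N) i}"
      by (auto simp: image_iff) (metis le_add_diff_inverse2 not_less)
    moreover have "(\<lambda>j. j + N) ` {j. \<alpha> (j + N) i} \<subseteq> {k. \<alpha> k i}" by auto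
    moreover have "inj (\<lambda>j. j + N)" by simp
    ultimately show ?thesis
      by (metis finite_Un finite_imageI finite_lessThan finite_subset inj_on_subset subset_UNIV finite_imageD)
  qed
  then show ?thesis by (simp add: progressive_def)
qed

lemma Seq_shift: "ts \<in> Seq \<Longrightarrow> (\<lambda>k. ts k + c) \<in> Seq"
proof -
  assume "ts \<in> Seq"
  then have "strict_mono ts" and "\<exists>k. M - c < ts k" for M by (auto simp: Seq_def)
  then show ?thesis by (simp add: Seq_def strict_mono_def diff_less_eq)
qed

lemma Seq_shift_index: "ts \<in> Seq \<Longrightarrow> (\<lambda>j. ts (j + N)) \<in> Seq"
proof -
  assume "ts \<in> Seq"
  then have mono: "strict_mono ts" and unb: "\<exists>k. M < ts k" for M by (auto simp: Seq_def)
  have "\<exists>j. M < ts (j + N)" for M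
    using unb[of M] mono by (metis le_add1 less_le_trans strict_mono_less_eq)
  then show ?thesis using mono by (auto simp: Seq_def strict_mono_def)
qed

lemma is_rep_shift: "is_rep \<rho> \<alpha> ts \<Longrightarrow> is_rep (shift c \<rho>) \<alpha> (\<lambda>k. ts k + c)"
  unfolding is_rep_def shift_def
  by (auto simp: Seq_shift image_iff) (metis diff_add_cancel)

lemma is_rep_after:
  assumes rep: "is_rep \<rho> \<alpha> ts" and N: "N = (LEAST k. t < ts k)"
  shows "is_rep (after t \<rho>) (\<lambda>j. \<alpha> (j + N)) (\<lambda>j. ts (j + N))"
proof -
  have idx: "ts k \<le> t \<longleftrightarrow> k < N" for k
    unfolding N by (rule Seq_le_iff_less_Least[OF is_repD(2)[OF rep]])
  have "after t \<rho> x = (\<lambda>_. False)" if "x \<notin> range (\<lambda>j. ts (j + N))" for x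
  proof (cases "t < x \<and> x \<in> range ts")
    case True
    then obtain k where k: "x = ts k" by blast
    with True idx[of k] have "x = ts (k - N + N)" by simp
    then show ?thesis using that by blast
  qed (use is_repD(5)[OF rep] in \<open>auto simp: after_def\<close>)
  then show ?thesis
    using is_repD[OF rep] idx
    by (auto simp: is_rep_def after_def progressive_shift_index Seq_shift_index not_le[symmetric])
qed

lemma is_rep_glue:
  assumes rep1: "is_rep \<rho>1 \<alpha> ts" and rep2: "is_rep \<rho>2 \<beta> us" and "t < us 0"
    and N: "N = (LEAST k. t < ts k)"
  shows "is_rep (glue \<rho>1 t \<rho>2) (\<lambda>k. if k < N then \<alpha> k else \<beta> (k - N))
           (\<lambda>k. if k < N then ts k else us (k - N))" (is "is_rep ?\<rho> ?\<alpha> ?ts")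
proof -
  have idx: "ts k \<le> t \<longleftrightarrow> k < N" for k
    unfolding N by (rule Seq_le_iff_less_Least[OF is_repD(2)[OF rep1]])
  have late: "t < us j" for j
    using \<open>t < us 0\<close> is_repD(3)[OF rep2] by (metis le0 less_le_trans strict_mono_less_eq)
  have "strict_mono ?ts"
    unfolding strict_mono_Suc_iff
    using is_repD(3)[OF rep1] is_repD(3)[OF rep2] idx late
    by (auto simp: strict_mono_def Suc_diff_le not_less less_Suc_eq) (meson idx late le_less_trans)
  moreover have "\<exists>k. M < ?ts k" for M
    using is_repD(2)[OF rep2] by (auto simp: Seq_def) (metis add_diff_cancel_right' not_add_less2)
  moreover have "progressive ?\<alpha>"
    using is_repD(1)[OF rep2] progressive_shift_index[of ?\<alpha> N] by simp
  moreover have "?\<rho> (?ts k) = ?\<alpha> k" for k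
    using idx[of k] late[of "k - N"] is_repD(4)[OF rep1] is_repD(4)[OF rep2]
    by (auto simp: glue_def)
  moreover have "?\<rho> x = (\<lambda>_. False)" if "x \<notin> range ?ts" for x
  proof (cases "x \<le> t")
    case True
    then have "x \<notin> range ts" using that idx by (auto simp: image_iff)
    then show ?thesis using True is_repD(5)[OF rep1] by (simp add: glue_def)
  next
    case False
    have "x \<notin> range us"
    proof
      assume "x \<in> range us"
      then obtain j where "x = ?ts (j + N)" by auto
      then show False using that by blast
    qed
    then show ?thesis using False is_repD(5)[OF rep2] by (simp add: glue_def)
  qed
  ultimately show ?thesis by (auto simp: is_rep_def Seq_def)
qed

lemma shift_in_P: "\<rho> \<in> P \<Longrightarrow> shift c \<rho> \<in> P"
  by (auto simp: P_def dest: is_rep_shift)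

lemma after_in_P: "\<rho> \<in> P \<Longrightarrow> after t \<rho> \<in> P"
  by (auto simp: P_def dest: is_rep_after[OF _ refl])

lemma glue_in_P:
  assumes "\<rho>1 \<in> P" and "\<rho>2 \<in> P"
  shows "glue \<rho>1 t \<rho>2 \<in> P"
proof -
  obtain \<alpha> ts \<beta> us where rep1: "is_rep \<rho>1 \<alpha> ts" and rep2: "is_rep \<rho>2 \<beta> us"
    using assms by (auto simp: P_def)
  define M where "M = (LEAST k. t < us k)"
  have "t < us (0 + M)"
    using Seq_le_iff_less_Least[OF is_repD(2)[OF rep2], of M t] by (simp add: M_def)
  then have "glue \<rho>1 t (after t \<rho>2) \<in> P"
    using is_rep_glue[OF rep1 is_rep_after[OF rep2 M_def] _ refl] by (auto simp: P_def)
  moreover have "glue \<rho>1 t (after t \<rho>2) = glue \<rho>1 t \<rho>2" by (auto simp: glue_def after_def)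
  ultimately show ?thesis by simp
qed

lemma lim_eq_iff: "lim_eq f v \<longleftrightarrow> (\<exists>T. \<forall>x\<ge>T. f x = v)"
  unfolding lim_eq_def by (metis order_refl)

lemma lim_eq_shift:
  assumes "lim_eq f v" and "\<And>x. x \<ge> t \<Longrightarrow> g x = f (x + c)"
  shows "lim_eq g v"
proof -
  obtain T where "\<And>x. x \<ge> T \<Longrightarrow> f x = v" using assms(1) by (auto simp: lim_eq_iff)
  then have "\<forall>x\<ge>max t (T - c). g x = v" using assms(2) by simp
  then show ?thesis unfolding lim_eq_iff by blast
qed

lemma recurrent_value_if_not_lim_eq:
  fixes f :: "real \<Rightarrow> 'a::finite"
  assumes "\<not> lim_eq f v"
  shows "\<exists>w. w \<noteq> v \<and> (\<forall>b. \<exists>t>b. f t = w)"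
proof (rule ccontr)
  assume "\<not> ?thesis"
  then have "\<exists>b. \<forall>t. f t = w \<longrightarrow> t \<le> b" if "w \<noteq> v" for w
    using that by (metis not_less)
  then obtain b where b: "\<And>w t. w \<noteq> v \<Longrightarrow> f t = w \<Longrightarrow> t \<le> b w" by metis
  define T where "T = Max (range b) + 1"
  have "f x = v" if "x \<ge> T" for x
  proof (rule ccontr)
    assume "f x \<noteq> v"
    then have "x \<le> b (f x)" using b by blast
    also have "\<dots> \<le> Max (range b)" by (rule Max_ge) simp_all
    finally have "x \<le> Max (range b)" .
    then show False using that by (simp add: T_def)
  qed
  then show False using assms by (auto simp: lim_eq_iff)
qed

lemma Seq_through_recurrent_value:
  assumes "\<And>b. \<exists>t>b. f t = w"
  shows "\<exists>s\<in>Seq. \<forall>k. f (s k) = w"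
proof -
  obtain g where g: "\<And>b. g b > b \<and> f (g b) = w" using assms by metis
  define s where "s k = ((\<lambda>b. g (b + 1)) ^^ k) (g 0)" for k
  have s_Suc: "s (Suc k) = g (s k + 1)" for k by (simp add: s_def)
  have "f (s k) = w" for k by (cases k) (simp_all add: s_def g)
  moreover have "strict_mono s"
    unfolding strict_mono_Suc_iff using g s_Suc by (metis add.commute less_add_one order.strict_trans)
  moreover have "real k < s k" for k
  proof (induction k)
    case 0 then show ?case using g[of 0] by (simp add: s_def)
  next
    case (Suc k) then show ?case using g[of "s k + 1"] by (simp add: s_Suc)
  qed
  then have "\<exists>k. M < s k" for M by (meson reals_Archimedean2 less_trans)
  ultimately show ?thesis by (auto simp: Seq_def)
qed

lemma omega_subset_singleton_iff:
  fixes \<Phi> :: "('n::finite) state \<Rightarrow> 'n state"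
  shows "omega \<Phi> \<rho> \<nu> \<subseteq> {\<mu>} \<longleftrightarrow> lim_eq (orbit \<Phi> \<rho> \<nu>) \<mu>"
proof
  assume "lim_eq (orbit \<Phi> \<rho> \<nu>) \<mu>"
  then obtain T where T: "\<And>x. x \<ge> T \<Longrightarrow> orbit \<Phi> \<rho> \<nu> x = \<mu>" by (auto simp: lim_eq_iff)
  show "omega \<Phi> \<rho> \<nu> \<subseteq> {\<mu>}"
  proof
    fix w assume "w \<in> omega \<Phi> \<rho> \<nu>"
    then obtain s K where s: "s \<in> Seq" and K: "\<And>k. k \<ge> K \<Longrightarrow> orbit \<Phi> \<rho> \<nu> (s k) = w"
      by (auto simp: omega_def)
    obtain k where "T < s k" using s by (auto simp: Seq_def)
    moreover have "s k \<le> s (max K k)" using s by (simp add: Seq_def strict_mono_less_eq)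
    ultimately show "w \<in> {\<mu>}" using T K[of "max K k"] by simp
  qed
next
  assume omega: "omega \<Phi> \<rho> \<nu> \<subseteq> {\<mu>}"
  show "lim_eq (orbit \<Phi> \<rho> \<nu>) \<mu>"
  proof (rule ccontr)
    assume "\<not> lim_eq (orbit \<Phi> \<rho> \<nu>) \<mu>"
    then obtain w where "w \<noteq> \<mu>" and "\<And>b. \<exists>t>b. orbit \<Phi> \<rho> \<nu> t = w"
      using recurrent_value_if_not_lim_eq by blast
    moreover from this(2) obtain s where "s \<in> Seq" "\<forall>k. orbit \<Phi> \<rho> \<nu> (s k) = w"
      by (rule Seq_through_recurrent_value[THEN bexE])
    then have "w \<in> omega \<Phi> \<rho> \<nu>" unfolding omega_def by blast
    ultimately show False using omega by blast
  qed
qed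

lemma Wbar_eq_lim:
  fixes \<Phi> :: "('n::finite) state \<Rightarrow> 'n state"
  shows "Wbar \<Phi> \<mu> = {\<mu>'. \<exists>\<rho>'\<in>P. lim_eq (orbit \<Phi> \<rho>' \<mu>') \<mu>}"
  by (simp add: Wbar_def omega_subset_singleton_iff)

lemma Wund_eq_lim:
  fixes \<Phi> :: "('n::finite) state \<Rightarrow> 'n state"
  shows "Wund \<Phi> \<mu> = {\<mu>'. \<forall>\<rho>'\<in>P. lim_eq (orbit \<Phi> \<rho>' \<mu>') \<mu>}"
  by (simp add: Wund_def omega_subset_singleton_iff)

lemma Wund_subset_Wbar: "Wund \<Phi> \<mu> \<subseteq> Wbar \<Phi> \<mu>"
  using P_nonempty by (auto simp: Wund_def Wbar_def)

lemma fixpoint_in_Wund: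
  fixes \<Phi> :: "('n::finite) state \<Rightarrow> 'n state"
  assumes "\<Phi> \<mu> = \<mu>"
  shows "\<mu> \<in> Wund \<Phi> \<mu>"
proof -
  have "orbit \<Phi> \<rho> \<mu> x = \<mu>" for \<rho> x
    by (auto simp: orbit_def Phi_comp_fixpoint[of \<Phi> \<mu>, OF assms] split: prod.split)
  then show ?thesis by (auto simp: Wund_eq_lim lim_eq_iff)
qed

lemma Wbar_orbit_closed:
  fixes \<Phi> :: "('n::finite) state \<Rightarrow> 'n state"
  assumes "\<mu>' \<in> Wbar \<Phi> \<mu>"
  shows "\<exists>\<rho>\<in>P. Or \<Phi> \<rho> \<mu>' \<subseteq> Wbar \<Phi> \<mu>"
proof -
  obtain \<rho> where \<rho>: "\<rho> \<in> P" and lim: "lim_eq (orbit \<Phi> \<rho> \<mu>') \<mu>"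
    using assms by (auto simp: Wbar_eq_lim)
  have "trajectory \<Phi> \<rho> \<mu>' t \<in> Wbar \<Phi> \<mu>" for t
  proof -
    have "orbit \<Phi> (after t \<rho>) (trajectory \<Phi> \<rho> \<mu>' t) x = orbit \<Phi> \<rho> \<mu>' (x + 0)" if "x \<ge> t" for x
      using that trajectory_after[OF finite_events[OF \<rho>]]
      by (simp add: orbit_eq_trajectory \<rho> after_in_P)
    then have "lim_eq (orbit \<Phi> (after t \<rho>) (trajectory \<Phi> \<rho> \<mu>' t)) \<mu>"
      by (rule lim_eq_shift[OF lim])
    then show ?thesis using after_in_P[OF \<rho>] by (auto simp: Wbar_eq_lim)
  qed
  then show ?thesis using \<rho> by (auto simp: Or_def orbit_eq_trajectory)
qed

lemma Wund_orbit_closed: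
  fixes \<Phi> :: "('n::finite) state \<Rightarrow> 'n state"
  assumes "\<mu>' \<in> Wund \<Phi> \<mu>" and \<rho>1: "\<rho>1 \<in> P"
  shows "Or \<Phi> \<rho>1 \<mu>' \<subseteq> Wund \<Phi> \<mu>"
proof -
  have "lim_eq (orbit \<Phi> \<rho>2 (trajectory \<Phi> \<rho>1 \<mu>' t)) \<mu>" if \<rho>2: "\<rho>2 \<in> P" for t \<rho>2
  proof -
    obtain \<beta> us where rep2: "is_rep \<rho>2 \<beta> us" using \<rho>2 by (auto simp: P_def)
    define c where "c = t + 1 - us 0"
    have quiet: "shift c \<rho>2 s = (\<lambda>_. False)" if "s \<le> t" for s
      using is_rep_quiet_before[OF rep2] that by (simp add: shift_def c_def)
    define \<rho>3 where "\<rho>3 = glue \<rho>1 t (shift c \<rho>2)"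
    have \<rho>3: "\<rho>3 \<in> P" using glue_in_P[OF \<rho>1 shift_in_P[OF \<rho>2]] by (simp add: \<rho>3_def)
    have "after t \<rho>3 = shift c \<rho>2" using quiet by (auto simp: \<rho>3_def after_def glue_def)
    moreover have "trajectory \<Phi> \<rho>3 \<mu>' t = trajectory \<Phi> \<rho>1 \<mu>' t"
      by (rule trajectory_cong) (simp add: \<rho>3_def glue_def)
    ultimately have "trajectory \<Phi> \<rho>3 \<mu>' x = trajectory \<Phi> \<rho>2 (trajectory \<Phi> \<rho>1 \<mu>' t) (x - c)"
      if "x \<ge> t" for x
      using trajectory_after[OF finite_events[OF \<rho>3] that] by (simp add: trajectory_shift)
    then have "orbit \<Phi> \<rho>2 (trajectory \<Phi> \<rho>1 \<mu>' t) y = orbit \<Phi> \<rho>3 \<mu>' (y + c)" if "y \<ge> t - c" for y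
      using that by (simp add: orbit_eq_trajectory \<rho>2 \<rho>3)
    moreover have "lim_eq (orbit \<Phi> \<rho>3 \<mu>') \<mu>" using assms(1) \<rho>3 by (auto simp: Wund_eq_lim)
    ultimately show ?thesis by (rule lim_eq_shift[rotated])
  qed
  then show ?thesis using \<rho>1 by (auto simp: Or_def orbit_eq_trajectory Wund_eq_lim)
qed

theorem theorem45:
  fixes \<Phi> :: "('n::finite) state \<Rightarrow> 'n state" and \<mu> :: "'n state"
  assumes "\<Phi> \<mu> = \<mu>"
  shows "Wbar \<Phi> \<mu> = {\<mu>'. \<exists>\<rho>'\<in>P. lim_eq (orbit \<Phi> \<rho>' \<mu>') \<mu>}
       \<and> Wund \<Phi> \<mu> = {\<mu>'. \<forall>\<rho>'\<in>P. lim_eq (orbit \<Phi> \<rho>' \<mu>') \<mu>}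
       \<and> {\<mu>} \<subseteq> Wund \<Phi> \<mu> \<and> Wund \<Phi> \<mu> \<subseteq> Wbar \<Phi> \<mu>
       \<and> p_attractive \<Phi> \<mu> \<and> n_attractive \<Phi> \<mu>
       \<and> p_invariant \<Phi> (Wbar \<Phi> \<mu>) \<and> n_invariant \<Phi> (Wund \<Phi> \<mu>)"
proof -
  have in_Wund: "\<mu> \<in> Wund \<Phi> \<mu>" and in_Wbar: "\<mu> \<in> Wbar \<Phi> \<mu>"
    using fixpoint_in_Wund[of \<Phi> \<mu>, OF assms] Wund_subset_Wbar by blast+
  have "p_invariant \<Phi> (Wbar \<Phi> \<mu>)"
    using in_Wbar Wbar_orbit_closed unfolding p_invariant_def by blast
  moreover have "n_invariant \<Phi> (Wund \<Phi> \<mu>)"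
    using in_Wund Wund_orbit_closed unfolding n_invariant_def by blast
  ultimately show ?thesis
    using in_Wund in_Wbar unfolding p_attractive_def n_attractive_def
    by (intro conjI Wbar_eq_lim Wund_eq_lim Wund_subset_Wbar) auto
qed

end
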